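(* Let $k\ge1$ and let $\mathcal{C}$ be a multiset of non-zero residues modulo $2^{k+1}$ such that no sub-collection of $\mathcal{C}$ sums to $2^k$ modulo $2^{k+1}$. Let $T_1(\mathcal{C})$, $T_2(\mathcal{C})$, $T_3(\mathcal{C})$ denote the results of applying a type 1, type 2, type 3 compression to $\mathcal{C}$ respectively (whenever such a compression is possible). Then $T_1(\mathcal{C})^*=\mathcal{C}^*$, $T_2(\mathcal{C})^*\subseteq\mathcal{C}^*$ and $T_3(\mathcal{C})^*\subseteq\mathcal{C}^*$. Moreover, if $T_2(\mathcal{C})$ or $T_3(\mathcal{C})$ contains $m$ pairwise disjoint non-empty sub-collections each summing to $0$ modulo $2^{k+1}$, then so does $\mathcal{C}$. Finally, if $T_1(\mathcal{C},t)$ denotes the result of a type 1 compression replacing the element $t$, and $T_1(\mathcal{C},t)$ contains $m+|t|-1$ pairwise disjoint non-empty sub-collections each summing to $0$ modulo $2^{k+1}$, then $\mathcal{C}$ contains at least $m$ such sub-collections.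
   Context: Multisets are called collections; disjoint sub-collections use disjoint occurrences of elements. For a multiset $\mathcal{D}=\{a_1,\dots,a_d\}$ of residues modulo $2^{k+1}$, the iterated sumset is the set $\mathcal{D}^*=\{\sum_{i\in I}a_i \bmod 2^{k+1}: I\subseteq[d]\}$ (including the empty sum $0$). For a residue $t$ modulo $2^{k+1}$, $|t|$ denotes the minimal absolute value of an integer in the residue class of $t$. Compressions (for $\mathcal{C}$ as in the claim): Type 1: if $\mathcal{C}$ contains at least $\lambda>0$ elements each equal to $1$ or $-1$ and also an element $t$ with $1<|t|\le\lambda+1$, replace $t$ by $|t|$ copies of $1$ if $t\in[1,2^k-1]$ and by $|t|$ copies of $-1$ otherwise. Type 2: if $\mathcal{C}$ contains an element $-t$ and two copies of $2^k-t$, replace the two copies of $2^k-t$ by two copies of $-t$. Type 3: if $\mathcal{C}$ contains at least $2^{k-1}$ elements each equal to $\pm1$ and two elements $u,v$ lying in the range $[(3/2)2^{k-1},2^k-1]$, replace $u$ and $v$ by $u-2^k$ and $v-2^k$. *)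

theory Defs
  imports Main "HOL-Library.Multiset"
begin

text \<open>Residues modulo 2^(k+1) are represented by their canonical integer
representatives in {0..<2^(k+1)}. Collections are int multisets.\<close>

definition modulus :: "nat \<Rightarrow> int" where
  "modulus k = 2 ^ (k + 1)"

definition sumset :: "nat \<Rightarrow> int multiset \<Rightarrow> int set" where
  "sumset k D = {sum_mset S mod modulus k | S. S \<subseteq># D}"

definition rabs :: "nat \<Rightarrow> int \<Rightarrow> nat" where
  "rabs k t = nat (min (t mod modulus k) (modulus k - t mod modulus k))"

definition pm_one_count :: "nat \<Rightarrow> int multiset \<Rightarrow> nat" where
  "pm_one_count k C = count C 1 + count C (modulus k - 1)"

definition compress1 :: "nat \<Rightarrow> int multiset \<Rightarrow> int \<Rightarrow> int multiset \<Rightarrow> bool" where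
  "compress1 k C t C' \<longleftrightarrow>
     (\<exists>lam::nat. lam > 0 \<and> pm_one_count k C \<ge> lam \<and>
        t \<in># C \<and> 1 < rabs k t \<and> rabs k t \<le> lam + 1 \<and>
        C' = C - {#t#} + replicate_mset (rabs k t)
               (if 1 \<le> t \<and> t \<le> 2 ^ k - 1 then 1 else modulus k - 1))"

definition compress2 :: "nat \<Rightarrow> int multiset \<Rightarrow> int multiset \<Rightarrow> bool" where
  "compress2 k C C' \<longleftrightarrow>
     (\<exists>t::int. (- t) mod modulus k \<in># C \<and>
        {#(2 ^ k - t) mod modulus k, (2 ^ k - t) mod modulus k#} \<subseteq># C \<and>
        C' = C - {#(2 ^ k - t) mod modulus k, (2 ^ k - t) mod modulus k#}
               + {#(- t) mod modulus k, (- t) mod modulus k#})"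

definition compress3 :: "nat \<Rightarrow> int multiset \<Rightarrow> int multiset \<Rightarrow> bool" where
  "compress3 k C C' \<longleftrightarrow>
     pm_one_count k C \<ge> 2 ^ (k - 1) \<and>
     (\<exists>u v::int. {#u, v#} \<subseteq># C \<and>
        2 * u \<ge> 3 * 2 ^ (k - 1) \<and> u \<le> 2 ^ k - 1 \<and>
        2 * v \<ge> 3 * 2 ^ (k - 1) \<and> v \<le> 2 ^ k - 1 \<and>
        C' = C - {#u, v#} + {#(u - 2 ^ k) mod modulus k, (v - 2 ^ k) mod modulus k#})"

text \<open>C contains m pairwise disjoint (in occurrences) non-empty sub-collections
each summing to 0 mod 2^(k+1).\<close>
definition has_zero_subcolls :: "nat \<Rightarrow> int multiset \<Rightarrow> nat \<Rightarrow> bool" where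
  "has_zero_subcolls k C m \<longleftrightarrow>
     (\<exists>Ss :: int multiset list. length Ss = m \<and>
        (\<forall>S \<in> set Ss. S \<noteq> {#} \<and> sum_mset S mod modulus k = 0) \<and>
        sum_list Ss \<subseteq># C)"

end

theory Submission
  imports Defs
begin

text \<open>
Let p and q be the numbers of copies of 1 and -1 in a collection and Y the collection of its
other elements. Then the sub-collection sums are exactly the residues of a sum over a
sub-collection of Y plus an integer of the interval [-q, p]. A type 1 compression trades t for
|t| copies of 1 or -1 of the same total: the interval grows by |t| in one direction, and since
p + q >= |t| - 1 this covers precisely the sums that used t. Type 2 and type 3 compressions
replace elements x by y = x - 2^k; a sum involving a single new element is recovered from the
old ones, in type 3 by trading a shortfall at the lower end of the interval for u + v.

For zero-sum families, a member containing only one of the two new elements y would, after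
swapping y back to x, give a sub-collection of C with sum 2^k. Hence both new elements lie in
the same member, and swapping both back keeps its sum 0. After a type 1 compression, either
|t| members contain the new element 1 or -1 and merge into one member that uses t, or fewer do
and they are discarded; either way at most |t| - 1 members are lost.
\<close>

lemma mset_subset_eq_add_splitE:
  assumes "S \<subseteq># A + B"
  obtains S1 S2 where "S = S1 + S2" "S1 \<subseteq># A" "S2 \<subseteq># B"
proof
  show "S = (S \<inter># A) + (S - A)" by (simp add: multiset_eq_iff min_def)
  show "S \<inter># A \<subseteq># A" by simp
  show "S - A \<subseteq># B" using assms by (simp add: subset_eq_diff_conv add.commute)
qed

lemma mset_subset_eq_add_disjointD:
  assumes "T \<subseteq># X + P" "\<forall>y\<in>#P. y \<notin># T"
  shows "T \<subseteq># X"
  unfolding subseteq_mset_def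
proof
  fix x
  have "count T x \<le> count X x + count P x"
    using assms(1) by (simp add: subseteq_mset_def)
  then show "count T x \<le> count X x"
    using assms(2) by (cases "x \<in># P") (auto simp: not_in_iff)
qed

lemma mset_subset_eq_pair_cases:
  assumes "Q \<subseteq># {#a, b#}"
  shows "Q = {#} \<or> Q = {#a#} \<or> Q = {#b#} \<or> Q = {#a, b#}"
proof (cases "a \<in># Q")
  case True
  then obtain Q' where Q: "Q = add_mset a Q'" by (metis multi_member_split)
  with assms have "Q' \<subseteq># {#b#}" by (simp add: mset_subset_eq_add_mset_cancel)
  then have "Q' = {#} \<or> Q' = {#b#}" by (metis nonempty_subseteq_mset_eq_single)
  then show ?thesis using Q by auto
next
  case False
  have "Q \<subseteq># {#b#}"
    by (rule mset_subset_eq_add_disjointD[of _ _ "{#a#}"]) (use assms False in simp_all)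
  then show ?thesis by (metis nonempty_subseteq_mset_eq_single)
qed

lemma replicate_mset_add: "replicate_mset (m + n) a = replicate_mset m a + replicate_mset n a"
  by (induction m) simp_all

lemma mset_subset_eq_add_replicateE:
  assumes "S \<subseteq># Y + replicate_mset p a"
  obtains A i where "S = A + replicate_mset i a" "A \<subseteq># Y" "i \<le> p"
  using assms by (metis mset_subset_eq_add_splitE msubseteq_replicate_msetE)

lemma subset_mset_of_sizeE:
  assumes "n \<le> size F"
  obtains G where "G \<subseteq># F" "size G = n"
proof -
  obtain xs where xs: "mset xs = F" using ex_mset by blast
  have "mset (take n xs) \<subseteq># mset xs"
    by (metis append_take_drop_id mset_append mset_subset_eq_add_left)
  moreover have "size (mset (take n xs)) = n" using assms xs by auto
  ultimately show thesis using that xs by blast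
qed

lemma Union_mset_mono: "G \<subseteq># F \<Longrightarrow> \<Sum>\<^sub># G \<subseteq># \<Sum>\<^sub># F"
  by (auto simp: subset_mset.le_iff_add)

lemma replicate_mset_subset_Union_mset:
  "\<forall>S\<in>#G. e \<in># S \<Longrightarrow> replicate_mset (size G) e \<subseteq># \<Sum>\<^sub># G"
proof (induction G)
  case (add S G)
  then have IH: "replicate_mset (size G) e \<subseteq># \<Sum>\<^sub># G" and "e \<in># S" by simp_all
  then obtain S' where "S = add_mset e S'" by (blast dest: multi_member_split)
  have "\<Sum>\<^sub># G \<subseteq># S' + \<Sum>\<^sub># G" by simp
  with IH \<open>S = add_mset e S'\<close> show ?case by (simp add: subset_mset.order_trans)
qed simp

lemma Union_mset_sum_mod_eq_0:
  fixes M :: int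
  shows "\<forall>S\<in>#G. sum_mset S mod M = 0 \<Longrightarrow> sum_mset (\<Sum>\<^sub># G) mod M = 0"
  by (induction G) (auto simp: mod_add_eq[symmetric])

section \<open>Disjoint zero-sum sub-collections\<close>

definition zero_sum_family :: "int \<Rightarrow> int multiset \<Rightarrow> int multiset multiset \<Rightarrow> bool" where
  "zero_sum_family M C F \<longleftrightarrow>
     (\<forall>S\<in>#F. S \<noteq> {#} \<and> sum_mset S mod M = 0) \<and> \<Sum>\<^sub># F \<subseteq># C"

lemma has_zero_subcolls_iff:
  "has_zero_subcolls k C m \<longleftrightarrow> (\<exists>F. size F = m \<and> zero_sum_family (modulus k) C F)"
proof
  assume "has_zero_subcolls k C m"
  then obtain Ss where "length Ss = m" "\<forall>S\<in>set Ss. S \<noteq> {#} \<and> sum_mset S mod modulus k = 0"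
      "sum_list Ss \<subseteq># C"
    unfolding has_zero_subcolls_def by blast
  then show "\<exists>F. size F = m \<and> zero_sum_family (modulus k) C F"
    by (intro exI[of _ "mset Ss"]) (simp add: zero_sum_family_def sum_mset_sum_list)
next
  assume "\<exists>F. size F = m \<and> zero_sum_family (modulus k) C F"
  then obtain F where "size F = m" "zero_sum_family (modulus k) C F" by blast
  moreover obtain Ss where "mset Ss = F" using ex_mset by blast
  ultimately show "has_zero_subcolls k C m"
    unfolding has_zero_subcolls_def zero_sum_family_def
    by (metis set_mset_mset size_mset sum_mset_sum_list)
qed

lemma zero_sum_family_mono:
  "zero_sum_family M C F \<Longrightarrow> G \<subseteq># F \<Longrightarrow> C \<subseteq># C' \<Longrightarrow> zero_sum_family M C' G"
  unfolding zero_sum_family_def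
  by (meson Union_mset_mono mset_subset_eqD subset_mset.order_trans)

lemma has_zero_subcolls_if_zero_sum_family:
  assumes "zero_sum_family (modulus k) C F" "m \<le> size F"
  shows "has_zero_subcolls k C m"
proof -
  obtain G where "G \<subseteq># F" "size G = m" using subset_mset_of_sizeE assms(2) .
  then show ?thesis
    using zero_sum_family_mono[OF assms(1)] has_zero_subcolls_iff by blast
qed

lemma zero_sum_subset_contains_pair:
  fixes M h :: int
  assumes S: "S \<subseteq># X + {#y, y'#}" "y \<in># S" "sum_mset S mod M = 0"
    and x: "x mod M = (y + h) mod M"
    and no_h: "\<And>S. S \<subseteq># X + {#x, x'#} \<Longrightarrow> sum_mset S mod M \<noteq> h mod M"
  shows "{#y, y'#} \<subseteq># S"
proof (rule ccontr)
  assume "\<not> {#y, y'#} \<subseteq># S"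
  then have "y' \<notin># S - {#y#}" using S(2) by (simp add: insert_subset_eq_iff)
  moreover have "S - {#y#} \<subseteq># X + {#y'#}" using S(1) by (simp add: subset_eq_diff_conv)
  ultimately have "S - {#y#} \<subseteq># X"
    using mset_subset_eq_add_disjointD[of "S - {#y#}" X "{#y'#}"] by simp
  then have "add_mset x (S - {#y#}) \<subseteq># X + {#x, x'#}"
    using subset_mset.add_mono[of "S - {#y#}" X "{#x#}" "{#x, x'#}"] by simp
  moreover have "sum_mset (add_mset x (S - {#y#})) mod M = h mod M"
  proof -
    have "sum_mset S mod M = 0 mod M" using S(3) by simp
    then have "(x + (sum_mset S - y)) mod M = ((y + h) + (0 - y)) mod M"
      using x by (intro mod_add_cong mod_diff_cong) simp_all
    then show ?thesis using S(2) by (simp add: sum_mset_diff)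
  qed
  ultimately show False using no_h by blast
qed

lemma zero_sum_family_swap_pair:
  fixes M h :: int
  assumes x1: "x1 mod M = (y1 + h) mod M" and x2: "x2 mod M = (y2 + h) mod M"
    and h2: "(2 * h) mod M = 0"
    and no_h: "\<And>S. S \<subseteq># X + {#x1, x2#} \<Longrightarrow> sum_mset S mod M \<noteq> h mod M"
    and F: "zero_sum_family M (X + {#y1, y2#}) F"
  shows "\<exists>F'. size F' = size F \<and> zero_sum_family M (X + {#x1, x2#}) F'"
proof -
  have F_zero: "S \<noteq> {#}" "sum_mset S mod M = 0" if "S \<in># F" for S
    using F that unfolding zero_sum_family_def by auto
  have F_sub: "\<Sum>\<^sub># F \<subseteq># X + {#y1, y2#}"
    using F unfolding zero_sum_family_def by blast
  have member_sub: "S \<subseteq># X + {#y1, y2#}" if "S \<in># F" for S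
    using Union_mset_mono[of "{#S#}" F] F_sub that by (simp add: subset_mset.order_trans)
  have pair1: "{#y1, y2#} \<subseteq># S" if "S \<in># F" "y1 \<in># S" for S
    using zero_sum_subset_contains_pair[OF member_sub[OF that(1)] that(2) F_zero(2)[OF that(1)] x1]
      no_h by blast
  have pair2: "{#y2, y1#} \<subseteq># S" if "S \<in># F" "y2 \<in># S" for S
    using zero_sum_subset_contains_pair[OF _ that(2) F_zero(2)[OF that(1)] x2, of X y1 x1]
      member_sub[OF that(1)] no_h
    by (simp add: add_mset_commute)
  show ?thesis
  proof (cases "\<exists>S\<in>#F. y1 \<in># S")
    case True
    then obtain S where S: "S \<in># F" "y1 \<in># S" by blast
    then obtain S0 where S0: "S = {#y1, y2#} + S0" using pair1 by (metis subset_mset.le_iff_add)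
    obtain F0 where F0: "F = add_mset S F0" using S(1) by (metis multi_member_split)
    define F' where "F' = add_mset (S0 + {#x1, x2#}) F0"
    have "sum_mset (S0 + {#x1, x2#}) mod M = 0"
    proof -
      have S0_zero: "(sum_mset S0 + (y1 + y2)) mod M = 0 mod M"
        using F_zero(2)[OF S(1)] by (simp add: S0 ac_simps)
      have "sum_mset (S0 + {#x1, x2#}) mod M = (sum_mset S0 + (x1 + x2)) mod M"
        by (simp add: ac_simps)
      also have "\<dots> = (sum_mset S0 + ((y1 + h) + (y2 + h))) mod M"
        by (rule mod_add_cong[OF refl mod_add_cong[OF x1 x2]])
      also have "\<dots> = ((sum_mset S0 + (y1 + y2)) + 2 * h) mod M" by (simp add: algebra_simps)
      also have "\<dots> = (0 + 0) mod M" using h2 by (intro mod_add_cong[OF S0_zero]) simp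
      finally show ?thesis by simp
    qed
    moreover have "\<Sum>\<^sub># F' \<subseteq># X + {#x1, x2#}"
      using F_sub by (simp add: F'_def F0 S0 add_ac)
    ultimately have "zero_sum_family M (X + {#x1, x2#}) F'"
      using F_zero unfolding zero_sum_family_def by (simp add: F'_def F0)
    moreover have "size F' = size F" by (simp add: F'_def F0)
    ultimately show ?thesis by blast
  next
    case False
    then have "\<forall>S\<in>#F. y2 \<notin># S" using pair2 mset_subset_eqD[of "{#y2, y1#}" _ y1] by fastforce
    with False have "\<Sum>\<^sub># F \<subseteq># X"
      by (intro mset_subset_eq_add_disjointD[OF F_sub]) auto
    then show ?thesis using F unfolding zero_sum_family_def
      by (metis mset_subset_eq_add_left subset_mset.order_trans)
  qed
qed

lemma zero_sum_family_avoiding: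
  assumes "zero_sum_family M (X + replicate_mset n e) F"
  shows "zero_sum_family M X (filter_mset (\<lambda>S. e \<notin># S) F)"
proof -
  have "\<Sum>\<^sub># (filter_mset (\<lambda>S. e \<notin># S) F) \<subseteq># X"
  proof (rule mset_subset_eq_add_disjointD)
    show "\<Sum>\<^sub># (filter_mset (\<lambda>S. e \<notin># S) F) \<subseteq># X + replicate_mset n e"
      using Union_mset_mono[of "filter_mset (\<lambda>S. e \<notin># S) F" F] assms
      unfolding zero_sum_family_def by (meson multiset_filter_subset subset_mset.order_trans)
  qed simp
  then show ?thesis using assms unfolding zero_sum_family_def by auto
qed

lemma zero_sum_family_merge_replicate:
  fixes M e t :: int
  assumes F: "zero_sum_family M (X + replicate_mset n e) F"
    and t: "(int n * e) mod M = t mod M"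
  shows "\<exists>F'. size F + 1 \<le> size F' + n \<and> zero_sum_family M (add_mset t X) F'"
proof -
  have F_zero: "S \<noteq> {#}" "sum_mset S mod M = 0" if "S \<in># F" for S
    using F that unfolding zero_sum_family_def by auto
  have F_sub: "\<Sum>\<^sub># F \<subseteq># X + replicate_mset n e"
    using F unfolding zero_sum_family_def by blast
  define G where "G = filter_mset (\<lambda>S. e \<in># S) F"
  show ?thesis
  proof (cases "n \<le> size G")
    case True
    obtain G0 where G0: "G0 \<subseteq># G" "size G0 = n" using subset_mset_of_sizeE True .
    then have "G0 \<subseteq># F" unfolding G_def by (meson multiset_filter_subset subset_mset.order_trans)
    then obtain H where H: "F = G0 + H" by (metis subset_mset.le_iff_add)
    have "\<forall>S\<in>#G0. e \<in># S" using G0(1) unfolding G_def by (auto dest: mset_subset_eqD)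
    then have "replicate_mset n e \<subseteq># \<Sum>\<^sub># G0"
      using G0(2) replicate_mset_subset_Union_mset by metis
    then obtain W where W: "\<Sum>\<^sub># G0 = replicate_mset n e + W" by (metis subset_mset.le_iff_add)
    define F' where "F' = add_mset (add_mset t W) H"
    have "size F + 1 = size F' + n" using G0(2) by (simp add: F'_def H)
    moreover have "sum_mset (add_mset t W) mod M = 0"
    proof -
      have "sum_mset (\<Sum>\<^sub># G0) mod M = 0"
        by (rule Union_mset_sum_mod_eq_0) (use F_zero H in auto)
      then have W_zero: "(int n * e + sum_mset W) mod M = 0 mod M" by (simp add: W)
      have "sum_mset (add_mset t W) mod M = (t + sum_mset W) mod M" by simp
      also have "\<dots> = (int n * e + sum_mset W) mod M" by (rule mod_add_cong[OF t[symmetric] refl])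
      finally show ?thesis using W_zero by simp
    qed
    moreover have "\<Sum>\<^sub># F' \<subseteq># add_mset t X"
      using F_sub by (simp add: F'_def H W add.assoc)
    ultimately show ?thesis
      using F_zero unfolding zero_sum_family_def by (intro exI[of _ F']) (auto simp: F'_def H)
  next
    case False
    define F' where "F' = filter_mset (\<lambda>S. e \<notin># S) F"
    have "size F = size G + size F'"
      unfolding G_def F'_def by (metis multiset_partition size_union)
    moreover have "X \<subseteq># add_mset t X" by (simp add: subset_mset.le_iff_add)
    then have "zero_sum_family M (add_mset t X) F'"
      using zero_sum_family_mono[OF zero_sum_family_avoiding[OF F]] unfolding F'_def by blast
    ultimately show ?thesis using False by (intro exI[of _ F']) simp
  qed
qed

section \<open>Sub-collection sums in the presence of 1 and -1\<close>

lemma modulus_ge_4: "1 \<le> k \<Longrightarrow> 4 \<le> modulus k"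
  using power_increasing[of 2 "k + 1" "2 :: int"] by (simp add: modulus_def)

lemma pm_ones_decompositionE:
  assumes "1 \<le> k"
  obtains Y where
    "X = Y + replicate_mset (count X 1) 1 + replicate_mset (count X (modulus k - 1)) (modulus k - 1)"
proof
  have "modulus k - 1 \<noteq> 1" using modulus_ge_4[OF assms] by simp
  then show "X = filter_mset (\<lambda>x. x \<noteq> 1 \<and> x \<noteq> modulus k - 1) X
      + replicate_mset (count X 1) 1 + replicate_mset (count X (modulus k - 1)) (modulus k - 1)"
    by (auto simp: multiset_eq_iff)
qed

lemma in_sumsetI: "B \<subseteq># D \<Longrightarrow> sum_mset B mod modulus k = x \<Longrightarrow> x \<in> sumset k D"
  unfolding sumset_def by blast

definition interval_sums :: "nat \<Rightarrow> int multiset \<Rightarrow> int \<Rightarrow> int \<Rightarrow> int set" where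
  "interval_sums k Y lo hi = {(sum_mset A + z) mod modulus k | A z. A \<subseteq># Y \<and> lo \<le> z \<and> z \<le> hi}"

lemma in_interval_sumsI:
  "A \<subseteq># Y \<Longrightarrow> lo \<le> z \<Longrightarrow> z \<le> hi \<Longrightarrow> (sum_mset A + z) mod modulus k = x
    \<Longrightarrow> x \<in> interval_sums k Y lo hi"
  unfolding interval_sums_def by blast

lemma sumset_add_pm_ones:
  "sumset k (Y + replicate_mset p 1 + replicate_mset q (modulus k - 1)) = interval_sums k Y (- int q) (int p)"
proof (intro equalityI subsetI)
  fix x assume "x \<in> sumset k (Y + replicate_mset p 1 + replicate_mset q (modulus k - 1))"
  then obtain S where S: "S \<subseteq># Y + replicate_mset p 1 + replicate_mset q (modulus k - 1)"
      "x = sum_mset S mod modulus k"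
    unfolding sumset_def by blast
  then obtain A i j where S_eq: "S = A + replicate_mset i 1 + replicate_mset j (modulus k - 1)"
      and "A \<subseteq># Y" "i \<le> p" "j \<le> q"
    by (metis mset_subset_eq_add_replicateE)
  have "sum_mset S = sum_mset A + (int i - int j) + int j * modulus k"
    by (simp add: S_eq algebra_simps)
  then show "x \<in> interval_sums k Y (- int q) (int p)"
    using S(2) \<open>A \<subseteq># Y\<close> \<open>i \<le> p\<close> \<open>j \<le> q\<close>
    by (intro in_interval_sumsI[of A _ _ "int i - int j"]) simp_all
next
  fix x assume "x \<in> interval_sums k Y (- int q) (int p)"
  then obtain A z where A: "A \<subseteq># Y" "- int q \<le> z" "z \<le> int p"
      "x = (sum_mset A + z) mod modulus k"
    unfolding interval_sums_def by blast
  define S where "S = A + replicate_mset (nat z) 1 + replicate_mset (nat (- z)) (modulus k - 1)"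
  have "S \<subseteq># Y + replicate_mset p 1 + replicate_mset q (modulus k - 1)"
    unfolding S_def using A by (intro subset_mset.add_mono) (auto simp: replicate_mset_msubseteq_iff)
  moreover have "sum_mset S = sum_mset A + z + int (nat (- z)) * modulus k"
    by (simp add: S_def algebra_simps)
  ultimately show "x \<in> sumset k (Y + replicate_mset p 1 + replicate_mset q (modulus k - 1))"
    using A(4) by (intro in_sumsetI[of S]) simp_all
qed

lemma interval_sums_add_mset:
  assumes t: "t mod modulus k = s mod modulus k" and s: "\<bar>s\<bar> \<le> hi - lo + 1"
  shows "interval_sums k (add_mset t Y) lo hi = interval_sums k Y (min lo (lo + s)) (max hi (hi + s))"
proof (intro equalityI subsetI)
  fix x assume "x \<in> interval_sums k (add_mset t Y) lo hi"
  then obtain A z where A: "A \<subseteq># add_mset t Y" "lo \<le> z" "z \<le> hi"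
      "x = (sum_mset A + z) mod modulus k"
    unfolding interval_sums_def by blast
  show "x \<in> interval_sums k Y (min lo (lo + s)) (max hi (hi + s))"
  proof (cases "t \<in># A")
    case True
    then obtain A' where A': "A = add_mset t A'" by (metis multi_member_split)
    have "(sum_mset A' + (t + z)) mod modulus k = (sum_mset A' + (s + z)) mod modulus k"
      using t by (intro mod_add_cong[OF refl mod_add_cong]) simp_all
    then show ?thesis
      using A A' by (intro in_interval_sumsI[of A' _ _ "s + z"]) (simp_all add: ac_simps)
  next
    case False
    then have "A \<subseteq># Y" using A(1) mset_subset_eq_add_disjointD[of A Y "{#t#}"] by simp
    then show ?thesis using A by (intro in_interval_sumsI[of A _ _ z]) simp_all
  qed
next
  fix x assume "x \<in> interval_sums k Y (min lo (lo + s)) (max hi (hi + s))"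
  then obtain A z where A: "A \<subseteq># Y" "min lo (lo + s) \<le> z" "z \<le> max hi (hi + s)"
      "x = (sum_mset A + z) mod modulus k"
    unfolding interval_sums_def by blast
  have "Y \<subseteq># add_mset t Y" by (simp add: subset_mset.le_iff_add)
  with A(1) have AY: "A \<subseteq># add_mset t Y" by (rule subset_mset.order_trans)
  show "x \<in> interval_sums k (add_mset t Y) lo hi"
  proof (cases "lo \<le> z \<and> z \<le> hi")
    case True
    then show ?thesis using A AY by (intro in_interval_sumsI[of A _ _ z]) simp_all
  next
    case False
    then have "lo \<le> z - s" "z - s \<le> hi" using A(2,3) s by auto
    moreover have "(sum_mset (add_mset t A) + (z - s)) mod modulus k = (sum_mset A + z) mod modulus k"
    proof -
      have "(sum_mset A + (t + (z - s))) mod modulus k = (sum_mset A + (s + (z - s))) mod modulus k"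
        using t by (intro mod_add_cong[OF refl mod_add_cong]) simp_all
      then show ?thesis by (simp add: ac_simps)
    qed
    ultimately show ?thesis using A by (intro in_interval_sumsI[of "add_mset t A"]) simp_all
  qed
qed

lemma sumset_replace_by_pm_ones:
  assumes "1 \<le> k" and e: "e = 1 \<or> e = modulus k - 1"
    and t: "(int n * e) mod modulus k = t mod modulus k"
    and n: "n \<le> count X 1 + count X (modulus k - 1) + 1"
  shows "sumset k (X + replicate_mset n e) = sumset k (add_mset t X)"
proof -
  define p where "p = count X 1"
  define q where "q = count X (modulus k - 1)"
  obtain Y where X: "X = Y + replicate_mset p 1 + replicate_mset q (modulus k - 1)"
    unfolding p_def q_def using pm_ones_decompositionE[OF assms(1)] .
  have "sumset k (add_mset t X) = interval_sums k (add_mset t Y) (- int q) (int p)"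
    using sumset_add_pm_ones[of k "add_mset t Y" p q] by (simp add: X)
  from e show ?thesis
  proof
    assume "e = 1"
    then have "sumset k (X + replicate_mset n e) = interval_sums k Y (- int q) (int p + int n)"
      using sumset_add_pm_ones[of k Y "p + n" q] by (simp add: X replicate_mset_add ac_simps)
    moreover have "interval_sums k (add_mset t Y) (- int q) (int p) = interval_sums k Y (- int q) (int p + int n)"
      using interval_sums_add_mset[of t k "int n" "int p" "- int q"] t n \<open>e = 1\<close>
      by (simp add: p_def q_def)
    ultimately show ?thesis using \<open>sumset k (add_mset t X) = _\<close> by simp
  next
    assume "e = modulus k - 1"
    then have "sumset k (X + replicate_mset n e) = interval_sums k Y (- int (q + n)) (int p)"
      using sumset_add_pm_ones[of k Y p "q + n"] by (simp add: X replicate_mset_add ac_simps)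
    moreover have "t mod modulus k = (- int n) mod modulus k"
    proof -
      have "int n * e = - int n + int n * modulus k"
        unfolding \<open>e = modulus k - 1\<close> by (simp add: algebra_simps)
      then have "(int n * e) mod modulus k = (- int n) mod modulus k" by (simp only: mod_mult_self1)
      with t show ?thesis by simp
    qed
    then have "interval_sums k (add_mset t Y) (- int q) (int p) = interval_sums k Y (- int (q + n)) (int p)"
      using interval_sums_add_mset[of t k "- int n" "int p" "- int q"] n
      by (simp add: p_def q_def)
    ultimately show ?thesis using \<open>sumset k (add_mset t X) = _\<close> by simp
  qed
qed

lemma interval_sums_add_small_negative:
  assumes w: "w mod modulus k = (- d) mod modulus k"
    and uv: "(u + v) mod modulus k = (- (d + e)) mod modulus k"
    and de: "0 \<le> d" "0 \<le> e" "d + e \<le> hi - lo + 1"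
    and A: "A \<subseteq># Y" "lo \<le> z" "z \<le> hi"
  shows "(sum_mset A + w + z) mod modulus k \<in> interval_sums k (Y + {#u, v#}) lo hi"
proof -
  have AY: "A \<subseteq># Y + {#u, v#}" using A(1) mset_subset_eq_add_left by (rule subset_mset.order_trans)
  have "(sum_mset A + (w + z)) mod modulus k = (sum_mset A + (- d + z)) mod modulus k"
    by (rule mod_add_cong[OF refl mod_add_cong[OF w refl]])
  then have target: "(sum_mset A + w + z) mod modulus k = (sum_mset A + (z - d)) mod modulus k"
    by (simp add: ac_simps)
  show ?thesis
  proof (cases "lo \<le> z - d")
    case True
    then show ?thesis using AY A de target by (intro in_interval_sumsI[of A _ _ "z - d"]) simp_all
  next
    case False
    have "(sum_mset A + (u + v) + (z + e)) mod modulus k = (sum_mset A + (- (d + e)) + (z + e)) mod modulus k"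
      by (rule mod_add_cong[OF mod_add_cong[OF refl uv] refl])
    then have "(sum_mset (A + {#u, v#}) + (z + e)) mod modulus k = (sum_mset A + w + z) mod modulus k"
      using target by (simp add: ac_simps)
    moreover have "A + {#u, v#} \<subseteq># Y + {#u, v#}" using A(1) by simp
    ultimately show ?thesis using False A de by (intro in_interval_sumsI[of "A + {#u, v#}"]) simp_all
  qed
qed

lemma interval_sums_replace_pair_subset:
  assumes u': "u' mod modulus k = (- d) mod modulus k" and v': "v' mod modulus k = (- e) mod modulus k"
    and uv: "(u + v) mod modulus k = (- (d + e)) mod modulus k"
    and de: "0 \<le> d" "0 \<le> e" "d + e \<le> hi - lo + 1"
  shows "interval_sums k (Y + {#u', v'#}) lo hi \<subseteq> interval_sums k (Y + {#u, v#}) lo hi"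
proof
  fix x assume "x \<in> interval_sums k (Y + {#u', v'#}) lo hi"
  then obtain S z where S: "S \<subseteq># Y + {#u', v'#}" "lo \<le> z" "z \<le> hi"
      "x = (sum_mset S + z) mod modulus k"
    unfolding interval_sums_def by blast
  then obtain A Q where AQ: "S = A + Q" "A \<subseteq># Y" "Q \<subseteq># {#u', v'#}"
    by (metis mset_subset_eq_add_splitE)
  have AY: "A \<subseteq># Y + {#u, v#}" using AQ(2) mset_subset_eq_add_left by (rule subset_mset.order_trans)
  from mset_subset_eq_pair_cases[OF AQ(3)]
  show "x \<in> interval_sums k (Y + {#u, v#}) lo hi"
  proof (elim disjE)
    assume "Q = {#}"
    then show ?thesis using S AQ AY by (intro in_interval_sumsI[of A _ _ z]) simp_all
  next
    assume "Q = {#u'#}"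
    then show ?thesis
      using interval_sums_add_small_negative[OF u' uv de AQ(2) S(2,3)] S(4) AQ(1) by (simp add: ac_simps)
  next
    assume "Q = {#v'#}"
    have vu: "(v + u) mod modulus k = (- (e + d)) mod modulus k" using uv by (simp add: ac_simps)
    have "e + d \<le> hi - lo + 1" using de by simp
    from interval_sums_add_small_negative[OF v' vu de(2,1) this AQ(2) S(2,3)]
    show ?thesis using S(4) AQ(1) \<open>Q = {#v'#}\<close> by (simp add: ac_simps add_mset_commute)
  next
    assume "Q = {#u', v'#}"
    have "(sum_mset A + (u' + v') + z) mod modulus k = (sum_mset A + (- d + - e) + z) mod modulus k"
      by (rule mod_add_cong[OF mod_add_cong[OF refl mod_add_cong[OF u' v']] refl])
    also have "\<dots> = (sum_mset A + (u + v) + z) mod modulus k"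
      using mod_add_cong[OF mod_add_cong[OF refl uv[symmetric]] refl] by simp
    finally have "(sum_mset (A + {#u, v#}) + z) mod modulus k = x"
      using S(4) AQ(1) \<open>Q = {#u', v'#}\<close> by (simp add: ac_simps)
    then show ?thesis using AQ(2) S(2,3) by (intro in_interval_sumsI[of "A + {#u, v#}"]) simp_all
  qed
qed

lemma sumset_replace_pair_subset:
  assumes "1 \<le> k"
    and u': "u' mod modulus k = (- d) mod modulus k" and v': "v' mod modulus k = (- e) mod modulus k"
    and uv: "(u + v) mod modulus k = (- (d + e)) mod modulus k"
    and de: "0 \<le> d" "0 \<le> e" "d + e \<le> int (count X 1 + count X (modulus k - 1)) + 1"
  shows "sumset k (X + {#u', v'#}) \<subseteq> sumset k (X + {#u, v#})"
proof -
  define p where "p = count X 1"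
  define q where "q = count X (modulus k - 1)"
  obtain Y where X: "X = Y + replicate_mset p 1 + replicate_mset q (modulus k - 1)"
    unfolding p_def q_def using pm_ones_decompositionE[OF assms(1)] .
  have sumset_eq: "sumset k (X + Z) = interval_sums k (Y + Z) (- int q) (int p)" for Z
    using sumset_add_pm_ones[of k "Y + Z" p q] by (simp add: X ac_simps)
  show ?thesis
    unfolding sumset_eq
    by (rule interval_sums_replace_pair_subset[OF u' v' uv de(1,2)])
      (use de(3) in \<open>simp add: p_def q_def\<close>)
qed

lemma sumset_replace_double_subset:
  assumes ab: "(2 * a) mod modulus k = (2 * b) mod modulus k" and b: "b \<in># X + {#a, a#}"
  shows "sumset k (X + {#b, b#}) \<subseteq> sumset k (X + {#a, a#})"
proof
  fix x assume "x \<in> sumset k (X + {#b, b#})"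
  then obtain S where S: "S \<subseteq># X + {#b, b#}" "x = sum_mset S mod modulus k"
    unfolding sumset_def by blast
  then obtain A Q where AQ: "S = A + Q" "A \<subseteq># X" "Q \<subseteq># {#b, b#}"
    by (metis mset_subset_eq_add_splitE)
  have A_aa: "(2 * a + sum_mset A) mod modulus k = (2 * b + sum_mset A) mod modulus k" for A
    by (rule mod_add_cong[OF ab refl])
  have "Q = {#} \<or> Q = {#b#} \<or> Q = {#b, b#}" using mset_subset_eq_pair_cases[OF AQ(3)] by blast
  then show "x \<in> sumset k (X + {#a, a#})"
  proof (elim disjE)
    assume "Q = {#}"
    moreover have "A \<subseteq># X + {#a, a#}"
      using AQ(2) mset_subset_eq_add_left by (rule subset_mset.order_trans)
    ultimately show ?thesis using S(2) AQ(1) by (intro in_sumsetI[of A]) simp_all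
  next
    assume Q: "Q = {#b#}"
    show ?thesis
    proof (cases "b \<in># A")
      case True
      then obtain A' where A': "A = add_mset b A'" by (metis multi_member_split)
      have "A' \<subseteq># X" using AQ(2) unfolding A' by (meson mset_subset_eq_insertD subset_mset.less_imp_le)
      then have "A' + {#a, a#} \<subseteq># X + {#a, a#}" by simp
      then show ?thesis
        using S(2) AQ(1) Q A' A_aa[of A'] by (intro in_sumsetI[of "A' + {#a, a#}"]) simp_all
    next
      case False
      have "A \<subseteq># X + {#a, a#} - {#b#}"
        unfolding subseteq_mset_def
      proof
        fix y
        have "count A y \<le> count X y" using AQ(2) by (simp add: subseteq_mset_def)
        then show "count A y \<le> count (X + {#a, a#} - {#b#}) y"
          using False by (cases "y = b") (auto simp: not_in_iff)
      qed
      then have "add_mset b A \<subseteq># X + {#a, a#}" using b by (simp add: insert_subset_eq_iff)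
      then show ?thesis using S(2) AQ(1) Q by (intro in_sumsetI[of "add_mset b A"]) simp_all
    qed
  next
    assume "Q = {#b, b#}"
    moreover have "A + {#a, a#} \<subseteq># X + {#a, a#}" using AQ(2) by simp
    ultimately show ?thesis using S(2) AQ(1) A_aa[of A] by (intro in_sumsetI[of "A + {#a, a#}"]) simp_all
  qed
qed

section \<open>The three compressions\<close>

lemma rabs_pm_one: "rabs k 1 = 1" "rabs k (modulus k - 1) = 1"
proof -
  have "2 \<le> modulus k" using power_increasing[of 1 "k + 1" "2 :: int"] by (simp add: modulus_def)
  moreover have "(modulus k - 1) mod modulus k = modulus k - 1"
    using \<open>2 \<le> modulus k\<close> by (intro mod_pos_pos_trivial) simp_all
  ultimately show "rabs k 1 = 1" "rabs k (modulus k - 1) = 1" unfolding rabs_def by simp_all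
qed

lemma rabs_times_sign:
  assumes "1 \<le> t" "t < modulus k"
  shows "(int (rabs k t) * (if 1 \<le> t \<and> t \<le> 2 ^ k - 1 then 1 else modulus k - 1)) mod modulus k
    = t mod modulus k"
proof -
  have M: "modulus k = 2 * 2 ^ k" by (simp add: modulus_def)
  have rabs: "int (rabs k t) = min t (modulus k - t)" using assms by (simp add: rabs_def)
  show ?thesis
  proof (cases "t \<le> 2 ^ k - 1")
    case True
    then show ?thesis using assms rabs M by simp
  next
    case False
    then have "int (rabs k t) = modulus k - t" using rabs M by simp
    moreover have "(modulus k - t) * (modulus k - 1) = t + (modulus k - t - 1) * modulus k"
      by (simp add: algebra_simps)
    ultimately show ?thesis using False by simp
  qed
qed

lemma half_modulus_mod: "(2 ^ k :: int) mod modulus k = 2 ^ k" "(2 * 2 ^ k :: int) mod modulus k = 0"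
  by (simp_all add: modulus_def)

lemma compress1E:
  assumes C: "\<forall>x\<in>#C. 1 \<le> x \<and> x < modulus k" and "compress1 k C t C'"
  obtains X e where "C = add_mset t X" "C' = X + replicate_mset (rabs k t) e"
    "e = 1 \<or> e = modulus k - 1" "(int (rabs k t) * e) mod modulus k = t mod modulus k"
    "2 \<le> rabs k t" "rabs k t \<le> count X 1 + count X (modulus k - 1) + 1"
proof -
  define e where "e = (if 1 \<le> t \<and> t \<le> 2 ^ k - 1 then 1 else modulus k - 1)"
  define X where "X = C - {#t#}"
  obtain lam :: nat where lam: "lam \<le> pm_one_count k C" "t \<in># C" "1 < rabs k t" "rabs k t \<le> lam + 1"
    and C': "C' = X + replicate_mset (rabs k t) e"
    using assms(2) unfolding compress1_def e_def X_def by blast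
  have CX: "C = add_mset t X" unfolding X_def using lam(2) by simp
  have "1 \<le> t" "t < modulus k" using C lam(2) by auto
  then have "(int (rabs k t) * e) mod modulus k = t mod modulus k"
    unfolding e_def by (rule rabs_times_sign)
  moreover have "t \<noteq> 1" "t \<noteq> modulus k - 1" using lam(3) rabs_pm_one by auto
  then have "rabs k t \<le> count X 1 + count X (modulus k - 1) + 1"
    using lam(1,4) by (simp add: pm_one_count_def CX)
  moreover have "e = 1 \<or> e = modulus k - 1" by (simp add: e_def)
  ultimately show thesis using that[OF CX C'] lam(3) by simp
qed

lemma compress1_sumset_eq:
  assumes "1 \<le> k" "\<forall>x\<in>#C. 1 \<le> x \<and> x < modulus k" "compress1 k C t C'"
  shows "sumset k C' = sumset k C"
proof -
  obtain X e where "C = add_mset t X" "C' = X + replicate_mset (rabs k t) e"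
    "e = 1 \<or> e = modulus k - 1" "(int (rabs k t) * e) mod modulus k = t mod modulus k"
    "rabs k t \<le> count X 1 + count X (modulus k - 1) + 1"
    using compress1E[OF assms(2,3)] by metis
  then show ?thesis using sumset_replace_by_pm_ones[OF assms(1)] by simp
qed

lemma compress1_zero_subcolls:
  assumes "\<forall>x\<in>#C. 1 \<le> x \<and> x < modulus k" "compress1 k C t C'"
    and "has_zero_subcolls k C' (m + rabs k t - 1)"
  shows "has_zero_subcolls k C m"
proof -
  obtain X e where C: "C = add_mset t X" and C': "C' = X + replicate_mset (rabs k t) e"
    and t: "(int (rabs k t) * e) mod modulus k = t mod modulus k" and "2 \<le> rabs k t"
    using compress1E[OF assms(1,2)] by metis
  obtain F where F: "size F = m + rabs k t - 1" "zero_sum_family (modulus k) C' F"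
    using assms(3) unfolding has_zero_subcolls_iff by blast
  obtain F' where "size F + 1 \<le> size F' + rabs k t" "zero_sum_family (modulus k) C F'"
    using zero_sum_family_merge_replicate[OF F(2)[unfolded C'] t] unfolding C by blast
  then show ?thesis using F(1) \<open>2 \<le> rabs k t\<close> has_zero_subcolls_if_zero_sum_family by simp
qed

lemma has_zero_subcolls_swap_pair:
  assumes "\<forall>S. S \<subseteq># X + {#x1, x2#} \<longrightarrow> sum_mset S mod modulus k \<noteq> 2 ^ k"
    and "x1 mod modulus k = (y1 + 2 ^ k) mod modulus k" "x2 mod modulus k = (y2 + 2 ^ k) mod modulus k"
    and "has_zero_subcolls k (X + {#y1, y2#}) m"
  shows "has_zero_subcolls k (X + {#x1, x2#}) m"
  using zero_sum_family_swap_pair[OF assms(2,3) half_modulus_mod(2)] assms(1,4) half_modulus_mod(1)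
  unfolding has_zero_subcolls_iff by metis

lemma compress2E:
  assumes "compress2 k C C'"
  obtains X a b where "C = X + {#a, a#}" "C' = X + {#b, b#}" "b \<in># C"
    "a mod modulus k = (b + 2 ^ k) mod modulus k"
proof -
  obtain t where t: "(- t) mod modulus k \<in># C"
      "{#(2 ^ k - t) mod modulus k, (2 ^ k - t) mod modulus k#} \<subseteq># C"
      "C' = C - {#(2 ^ k - t) mod modulus k, (2 ^ k - t) mod modulus k#}
        + {#(- t) mod modulus k, (- t) mod modulus k#}"
    using assms unfolding compress2_def by blast
  show thesis
  proof (rule that)
    show "C = (C - {#(2 ^ k - t) mod modulus k, (2 ^ k - t) mod modulus k#})
      + {#(2 ^ k - t) mod modulus k, (2 ^ k - t) mod modulus k#}"
      by (rule subset_mset.diff_add[OF t(2), symmetric])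
    show "((2 ^ k - t) mod modulus k) mod modulus k = ((- t) mod modulus k + 2 ^ k) mod modulus k"
      by (simp add: mod_add_left_eq)
  qed (use t in simp_all)
qed

lemma compress2_sumset_subset:
  assumes "compress2 k C C'"
  shows "sumset k C' \<subseteq> sumset k C"
proof -
  obtain X a b where C: "C = X + {#a, a#}" and C': "C' = X + {#b, b#}" and b: "b \<in># C"
    and ab: "a mod modulus k = (b + 2 ^ k) mod modulus k"
    using compress2E[OF assms] .
  have "(2 * a) mod modulus k = (2 * (b + 2 ^ k)) mod modulus k"
    using mod_mult_cong[OF refl ab, of 2] .
  also have "\<dots> = (2 * b + 2 * 2 ^ k) mod modulus k" by (simp add: distrib_left)
  also have "\<dots> = (2 * b) mod modulus k" by (metis mod_add_right_eq half_modulus_mod(2) add_0_right)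
  finally show ?thesis using b unfolding C C' by (rule sumset_replace_double_subset)
qed

lemma compress2_zero_subcolls:
  assumes "\<forall>S. S \<subseteq># C \<longrightarrow> sum_mset S mod modulus k \<noteq> 2 ^ k" "compress2 k C C'"
    and "has_zero_subcolls k C' m"
  shows "has_zero_subcolls k C m"
proof -
  obtain X a b where "C = X + {#a, a#}" "C' = X + {#b, b#}"
    "a mod modulus k = (b + 2 ^ k) mod modulus k"
    using compress2E[OF assms(2)] by metis
  then show ?thesis using has_zero_subcolls_swap_pair[of X a a k b b m] assms(1,3) by simp
qed

lemma compress3E:
  assumes "1 \<le> k" "compress3 k C C'"
  obtains X u v u' v' d e where "C = X + {#u, v#}" "C' = X + {#u', v'#}"
    "u mod modulus k = (u' + 2 ^ k) mod modulus k" "v mod modulus k = (v' + 2 ^ k) mod modulus k"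
    "u' mod modulus k = (- d) mod modulus k" "v' mod modulus k = (- e) mod modulus k"
    "(u + v) mod modulus k = (- (d + e)) mod modulus k"
    "0 \<le> d" "0 \<le> e" "d + e \<le> int (count X 1 + count X (modulus k - 1)) + 1"
proof -
  define K :: int where "K = 2 ^ (k - 1)"
  obtain j where j: "k = Suc j" using assms(1) by (cases k) auto
  have K: "(2 :: int) ^ k = 2 * K" "modulus k = 4 * K" "1 \<le> K"
    by (simp_all add: K_def modulus_def j)
  obtain u v where uv: "{#u, v#} \<subseteq># C"
      "3 * K \<le> 2 * u" "u \<le> 2 ^ k - 1" "3 * K \<le> 2 * v" "v \<le> 2 ^ k - 1"
    and C': "C' = C - {#u, v#} + {#(u - 2 ^ k) mod modulus k, (v - 2 ^ k) mod modulus k#}"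
    and pm: "2 ^ (k - 1) \<le> pm_one_count k C"
    using assms(2) unfolding compress3_def K_def by blast
  define X where "X = C - {#u, v#}"
  have CX: "C = X + {#u, v#}" unfolding X_def by (rule subset_mset.diff_add[OF uv(1), symmetric])
  have "u \<noteq> 1" "u \<noteq> modulus k - 1" "v \<noteq> 1" "v \<noteq> modulus k - 1" using uv K by auto
  then have "2 ^ (k - 1) \<le> count X 1 + count X (modulus k - 1)"
    using pm by (simp add: pm_one_count_def CX)
  then have count_X: "K \<le> int (count X 1 + count X (modulus k - 1))"
    unfolding K_def by (metis of_nat_le_iff of_nat_numeral of_nat_power)
  have sum_uv: "u + v = - ((2 ^ k - u) + (2 ^ k - v)) + modulus k" using K by simp
  show thesis
  proof (rule that[of X u v "(u - 2 ^ k) mod modulus k" "(v - 2 ^ k) mod modulus k" "2 ^ k - u" "2 ^ k - v"])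
    show "C' = X + {#(u - 2 ^ k) mod modulus k, (v - 2 ^ k) mod modulus k#}" unfolding X_def C' ..
    show "u mod modulus k = ((u - 2 ^ k) mod modulus k + 2 ^ k) mod modulus k"
      "v mod modulus k = ((v - 2 ^ k) mod modulus k + 2 ^ k) mod modulus k"
      by (simp_all add: mod_add_left_eq)
    show "(u + v) mod modulus k = (- ((2 ^ k - u) + (2 ^ k - v))) mod modulus k"
      unfolding sum_uv by simp
  qed (use CX uv K count_X in simp_all)
qed

lemma compress3_sumset_subset:
  assumes "1 \<le> k" "compress3 k C C'"
  shows "sumset k C' \<subseteq> sumset k C"
proof -
  obtain X u v u' v' d e where "C = X + {#u, v#}" "C' = X + {#u', v'#}"
    "u' mod modulus k = (- d) mod modulus k" "v' mod modulus k = (- e) mod modulus k"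
    "(u + v) mod modulus k = (- (d + e)) mod modulus k"
    "0 \<le> d" "0 \<le> e" "d + e \<le> int (count X 1 + count X (modulus k - 1)) + 1"
    using compress3E[OF assms] by metis
  then show ?thesis using sumset_replace_pair_subset[OF assms(1)] by simp
qed

lemma compress3_zero_subcolls:
  assumes "1 \<le> k" "\<forall>S. S \<subseteq># C \<longrightarrow> sum_mset S mod modulus k \<noteq> 2 ^ k" "compress3 k C C'"
    and "has_zero_subcolls k C' m"
  shows "has_zero_subcolls k C m"
proof -
  obtain X u v u' v' where "C = X + {#u, v#}" "C' = X + {#u', v'#}"
    "u mod modulus k = (u' + 2 ^ k) mod modulus k" "v mod modulus k = (v' + 2 ^ k) mod modulus k"
    using compress3E[OF assms(1,3)] by metis
  then show ?thesis using has_zero_subcolls_swap_pair[of X u v k u' v' m] assms(2,4) by simp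
qed

theorem lemma3p5:
  fixes k :: nat and C :: "int multiset"
  assumes "k \<ge> 1"
    and "\<forall>x \<in># C. 1 \<le> x \<and> x < modulus k"
    and "\<forall>S. S \<subseteq># C \<longrightarrow> sum_mset S mod modulus k \<noteq> 2 ^ k"
  shows "(\<forall>t C'. compress1 k C t C' \<longrightarrow>
            sumset k C' = sumset k C \<and>
            (\<forall>m. has_zero_subcolls k C' (m + rabs k t - 1) \<longrightarrow> has_zero_subcolls k C m))
       \<and> (\<forall>C'. compress2 k C C' \<longrightarrow>
            sumset k C' \<subseteq> sumset k C \<and>
            (\<forall>m. has_zero_subcolls k C' m \<longrightarrow> has_zero_subcolls k C m))
       \<and> (\<forall>C'. compress3 k C C' \<longrightarrow>
            sumset k C' \<subseteq> sumset k C \<and>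
            (\<forall>m. has_zero_subcolls k C' m \<longrightarrow> has_zero_subcolls k C m))"
  using compress1_sumset_eq[OF assms(1,2)] compress1_zero_subcolls[OF assms(2)]
    compress2_sumset_subset compress2_zero_subcolls[OF assms(3)]
    compress3_sumset_subset[OF assms(1)] compress3_zero_subcolls[OF assms(1,3)]
  by blast

end
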